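(* Let $G$ be a compact subset of $\mathbb{T}$ that is Ahlfors regular with dimension $\gamma\in(0,1]$, let $(X_n)_{n\ge1}$ be independent random points each distributed according to the normalized $\gamma$-dimensional Hausdorff measure restricted to $G$, and let $\mathrm{r}=(r_n)$ be a nonincreasing sequence in $(0,1]$ for which there is $\rho\in(0,\infty)$ with $\sum_n r_n^\nu=\infty$ for $\nu<\rho$ and $\sum_n r_n^\nu<\infty$ for $\nu>\rho$. If $\gamma\nu<\rho$, then $\mathcal{E}(\mathrm{X},\mathrm{r}^\nu)=G$ with probability one.
   Context: $\mathbb{T}=\mathbb{R}/\mathbb{Z}$ with quotient distance $d$. A compact $G\subseteq\mathbb{T}$ is Ahlfors regular with dimension $\gamma$ if there is $c>0$ with $r^\gamma/c\le\mathcal{H}^\gamma(G\cap B(x,r))\le cr^\gamma$ for all $x\in G$, $r>0$, where $B(x,r)$ is the open arc centered at $x$ of length $2r$. $\mathcal{E}(\mathrm{X},\mathrm{r}^\nu)=\{\xi\in\mathbb{T}: d(\xi,X_n)<r_n^\nu\text{ for infinitely many }n\}$. *)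

theory Defs
  imports "HOL-Probability.Probability"
begin

text \<open>The circle T = R/Z is represented by the set of representatives [0,1)
  of real numbers, equipped with the quotient distance.\<close>

definition torus :: "real set" where
  "torus = {0..<1}"

definition tdist :: "real \<Rightarrow> real \<Rightarrow> real" where
  "tdist x y = (INF k::int. \<bar>x - y - of_int k\<bar>)"

definition torus_metric :: "real metric" where
  "torus_metric = metric (torus, tdist)"

definition torus_borel :: "real measure" where
  "torus_borel = sigma torus {U. openin (mtopology_of torus_metric) U}"

definition tball :: "real \<Rightarrow> real \<Rightarrow> real set" where
  "tball x r = {y \<in> torus. tdist x y < r}"

definition tdiam :: "real set \<Rightarrow> real" where
  "tdiam U = (if U = {} then 0 else (SUP x\<in>U. SUP y\<in>U. tdist x y))"

definition hausdorff_pre :: "real \<Rightarrow> real \<Rightarrow> real set \<Rightarrow> ennreal" where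
  "hausdorff_pre \<gamma> \<delta> A =
     (INF U \<in> {U :: nat \<Rightarrow> real set. (\<forall>i. U i \<subseteq> torus \<and> tdiam (U i) \<le> \<delta>) \<and> A \<subseteq> (\<Union>i. U i)}.
        (\<Sum>i. ennreal (tdiam (U i) powr \<gamma>)))"

definition hausdorff :: "real \<Rightarrow> real set \<Rightarrow> ennreal" where
  "hausdorff \<gamma> A = (SUP \<delta> \<in> {0<..}. hausdorff_pre \<gamma> \<delta> A)"

definition ahlfors_regular :: "real set \<Rightarrow> real \<Rightarrow> bool" where
  "ahlfors_regular G \<gamma> \<longleftrightarrow> G \<subseteq> torus \<and> (\<exists>c>0. \<forall>x\<in>G. \<forall>r. 0 < r \<and> r \<le> 1 \<longrightarrow>
      ennreal (r powr \<gamma> / c) \<le> hausdorff \<gamma> (G \<inter> tball x r) \<and>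
      hausdorff \<gamma> (G \<inter> tball x r) \<le> ennreal (c * r powr \<gamma>))"

definition hausdorff_prob :: "real \<Rightarrow> real set \<Rightarrow> real measure" where
  "hausdorff_prob \<gamma> G = measure_of torus (sets torus_borel)
      (\<lambda>A. hausdorff \<gamma> (A \<inter> G) / hausdorff \<gamma> G)"

definition limsup_hits :: "(nat \<Rightarrow> real) \<Rightarrow> (nat \<Rightarrow> real) \<Rightarrow> real \<Rightarrow> real set" where
  "limsup_hits X r \<nu> = {\<xi> \<in> torus. \<exists>\<^sub>\<infinity>n. tdist \<xi> (X n) < r n powr \<nu>}"

end

theory Submission
  imports Defs "HOL-Real_Asymp.Real_Asymp"
begin

text \<open>Put \<open>h = r\<^sub>N\<^sup>\<nu> / 3\<close> and cover \<open>G\<close> by at most \<open>1/h + 1\<close> arcs of radius \<open>h\<close> centred in \<open>G\<close>.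
  By Ahlfors regularity each \<open>X\<^sub>n\<close> lands in a given arc with probability at least \<open>h\<^sup>\<gamma>/c\<^sup>2\<close>, so by
  independence the probability that some arc is missed by all \<open>X\<^sub>n\<close>, \<open>N/2 < n \<le> N\<close>, is at most
  \<open>(1/h + 1) exp(-h\<^sup>\<gamma> N / 2c\<^sup>2)\<close>. For \<open>\<gamma>\<nu> < b < \<rho>\<close> the divergence of \<open>\<Sum> r\<^sub>n\<^sup>b\<close> forces
  \<open>r\<^sub>N \<ge> N\<^sup>-\<^sup>\<sigma>\<close> for infinitely many \<open>N\<close>, where \<open>\<sigma>\<gamma>\<nu> < 1\<close>; along these \<open>N\<close> the bound tends to \<open>0\<close>.
  Hence almost surely infinitely many blocks hit every point of \<open>G\<close> within \<open>r\<^sub>N\<^sup>\<nu> \<le> r\<^sub>n\<^sup>\<nu>\<close>, i.e.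
  \<open>G \<subseteq> \<E>(X, r\<^sup>\<nu>)\<close>. Conversely \<open>X\<^sub>n \<in> G\<close> almost surely, \<open>G\<close> is closed and \<open>r\<^sub>n\<^sup>\<nu> \<rightarrow> 0\<close>.\<close>

definition int_dist :: "real \<Rightarrow> real" where
  "int_dist t = \<bar>t - of_int (round t)\<bar>"

lemma int_dist_le: "int_dist t \<le> \<bar>t - of_int k\<bar>"
proof (cases "k = round t")
  case False
  then have "\<bar>k - round t\<bar> \<ge> 1" by linarith
  then have "\<bar>real_of_int k - of_int (round t)\<bar> \<ge> 1"
    by (metis of_int_1_le_iff of_int_abs of_int_diff)
  then show ?thesis
    using of_int_round_abs_le[of t] unfolding int_dist_def by linarith
qed (simp add: int_dist_def)

lemma tdist_eq_int_dist: "tdist x y = int_dist (x - y)"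
  unfolding tdist_def
proof (rule antisym)
  show "(INF k::int. \<bar>x - y - of_int k\<bar>) \<le> int_dist (x - y)"
    unfolding int_dist_def
    by (rule cINF_lower2[where x = "round (x - y)"]) (auto intro: bdd_belowI2[where m = 0])
qed (rule cINF_greatest, auto simp: int_dist_le)

lemma int_dist_minus: "int_dist (- t) = int_dist t"
  using int_dist_le[of "- t" "- round t"] int_dist_le[of t "- round (- t)"]
  by (simp add: int_dist_def abs_minus_commute)

lemma int_dist_add_le: "int_dist (a + b) \<le> int_dist a + int_dist b"
  using int_dist_le[of "a + b" "round a + round b"] by (simp add: int_dist_def)

lemma tdist_le_abs: "tdist x y \<le> \<bar>x - y\<bar>"
  using int_dist_le[of "x - y" 0] by (simp add: tdist_eq_int_dist)

lemma tdist_less_one: "tdist x y < 1"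
  using of_int_round_abs_le[of "x - y"] by (simp add: tdist_eq_int_dist int_dist_def abs_minus_commute)

lemma tdist_commute: "tdist x y = tdist y x"
  by (metis tdist_eq_int_dist int_dist_minus minus_diff_eq)

lemma tdist_triangle: "tdist x z \<le> tdist x y + tdist y z"
  using int_dist_add_le[of "x - y" "y - z"] by (simp add: tdist_eq_int_dist)

lemma tdist_eq_0_iff: "x \<in> torus \<Longrightarrow> y \<in> torus \<Longrightarrow> tdist x y = 0 \<longleftrightarrow> x = y"
proof
  assume "x \<in> torus" "y \<in> torus" "tdist x y = 0"
  then have "x - y = of_int (round (x - y))" "\<bar>x - y\<bar> < 1"
    by (auto simp: tdist_eq_int_dist int_dist_def torus_def)
  then have "\<bar>round (x - y)\<bar> < 1"
    by (metis of_int_abs of_int_1 of_int_less_iff)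
  with \<open>x - y = of_int (round (x - y))\<close> show "x = y" by simp
qed (simp add: tdist_eq_int_dist int_dist_def)

lemma Metric_space_torus: "Metric_space torus tdist"
proof
  fix x y z
  show "0 \<le> tdist x y" by (simp add: tdist_eq_int_dist int_dist_def)
  show "tdist x y = tdist y x" by (rule tdist_commute)
  show "tdist x z \<le> tdist x y + tdist y z" by (rule tdist_triangle)
  assume "x \<in> torus" "y \<in> torus"
  then show "tdist x y = 0 \<longleftrightarrow> x = y" by (rule tdist_eq_0_iff)
qed

lemma mtopology_of_torus_metric: "mtopology_of torus_metric = Metric_space.mtopology torus tdist"
  by (simp add: torus_metric_def mtopology_of_def Metric_space.mspace_metric[OF Metric_space_torus]
      Metric_space.mdist_metric[OF Metric_space_torus])

lemma space_torus_borel: "space torus_borel = torus"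
  unfolding torus_borel_def by (rule space_measure_of_conv)

lemma openin_torus_borel:
  assumes "openin (mtopology_of torus_metric) U" shows "U \<in> sets torus_borel"
proof -
  have "{U. openin (mtopology_of torus_metric) U} \<subseteq> Pow torus"
    using openin_subset
    by (fastforce simp: mtopology_of_torus_metric Metric_space.topspace_mtopology[OF Metric_space_torus])
  then show ?thesis
    using assms unfolding torus_borel_def sets_measure_of_conv by auto
qed

lemma tball_torus_borel: "y \<in> torus \<Longrightarrow> tball y h \<in> sets torus_borel"
  using Metric_space.openin_mball[OF Metric_space_torus, of y h]
  by (intro openin_torus_borel)
    (simp add: mtopology_of_torus_metric tball_def Metric_space.mball_def[OF Metric_space_torus])

lemma compactin_imp_closedin_torus:
  "compactin (mtopology_of torus_metric) G \<Longrightarrow> closedin (mtopology_of torus_metric) G"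
  unfolding mtopology_of_torus_metric
  using compactin_imp_closedin Metric_space.Hausdorff_space_mtopology[OF Metric_space_torus] by blast

lemma closedin_torus_borel:
  assumes "closedin (mtopology_of torus_metric) G" shows "G \<in> sets torus_borel"
proof -
  interpret T: Metric_space torus tdist by (rule Metric_space_torus)
  have "openin T.mtopology (torus - G)" "G \<subseteq> torus"
    using assms closedin_subset by (auto simp: closedin_def mtopology_of_torus_metric)
  then show ?thesis
    using openin_torus_borel sets.compl_sets space_torus_borel
    by (metis double_diff mtopology_of_torus_metric order_refl)
qed

lemma closedin_torus_dist_bounded_below:
  assumes "closedin (mtopology_of torus_metric) G" "\<xi> \<in> torus" "\<xi> \<notin> G"
  obtains e where "e > 0" "\<And>y. y \<in> G \<Longrightarrow> e \<le> tdist \<xi> y"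
proof -
  interpret T: Metric_space torus tdist by (rule Metric_space_torus)
  have "openin T.mtopology (torus - G)" "G \<subseteq> torus"
    using assms(1) closedin_subset by (auto simp: closedin_def mtopology_of_torus_metric)
  then obtain e where "e > 0" "T.mball \<xi> e \<subseteq> torus - G"
    using assms(2,3) unfolding T.openin_mtopology by blast
  moreover have "e \<le> tdist \<xi> y" if "y \<in> G" for y
    using that \<open>G \<subseteq> torus\<close> \<open>T.mball \<xi> e \<subseteq> torus - G\<close> assms(2)
    by (meson DiffD2 T.in_mball not_le subsetD)
  ultimately show ?thesis using that by blast
qed

lemma ennreal_inverse_antimono:
  fixes x y :: ennreal
  assumes "x \<le> y" shows "inverse y \<le> inverse x"
proof (cases "x = 0")
  case False
  show ?thesis
  proof (cases y rule: ennreal_cases)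
    case (real b)
    then obtain a where a: "x = ennreal a" "0 < a"
      using assms False by (metis ennreal_cases ennreal_less_top leD top.not_eq_extremum
          ennreal_0 less_eq_real_def)
    moreover have "a \<le> b" using assms a real by (simp add: ennreal_le_iff)
    ultimately show ?thesis using real by (simp add: inverse_ennreal le_imp_inverse_le)
  qed simp
qed simp

lemma space_hausdorff_prob: "space (hausdorff_prob \<gamma> G) = torus"
  unfolding hausdorff_prob_def by (rule space_measure_of_conv)

lemma emeasure_hausdorff_prob:
  assumes "prob_space (hausdorff_prob \<gamma> G)" "A \<in> sets torus_borel"
  shows "emeasure (hausdorff_prob \<gamma> G) A = hausdorff \<gamma> (A \<inter> G) / hausdorff \<gamma> G"
proof -
  let ?\<mu> = "\<lambda>A. hausdorff \<gamma> (A \<inter> G) / hausdorff \<gamma> G"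
  have sigma: "sigma_sets torus (sets torus_borel) = sets torus_borel"
    using sets.sigma_sets_eq[of torus_borel] by (simp add: space_torus_borel)
  have "measure_space torus (sets torus_borel) ?\<mu>"
    using prob_space.emeasure_space_1[OF assms(1)] emeasure_measure_of_conv[of torus "sets torus_borel" ?\<mu>]
    by (auto simp: hausdorff_prob_def sigma split: if_splits)
  then show ?thesis
    using assms(2) emeasure_measure_of_conv[of torus "sets torus_borel" ?\<mu>]
    by (simp add: hausdorff_prob_def sigma)
qed

lemma hausdorff_prob_ge:
  assumes P: "prob_space (hausdorff_prob \<gamma> G)" and A: "A \<in> sets torus_borel"
    and "0 \<le> a" "0 < c" "ennreal a \<le> hausdorff \<gamma> (A \<inter> G)" "hausdorff \<gamma> G \<le> ennreal c"
  shows "ennreal (a / c) \<le> emeasure (hausdorff_prob \<gamma> G) A"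
proof -
  have "ennreal (a / c) = ennreal a * inverse (ennreal c)"
    using assms(3,4) by (simp add: divide_ennreal[symmetric] divide_ennreal_def)
  also have "\<dots> \<le> hausdorff \<gamma> (A \<inter> G) * inverse (hausdorff \<gamma> G)"
    using assms(5,6) by (intro mult_mono ennreal_inverse_antimono) auto
  finally show ?thesis
    by (simp add: emeasure_hausdorff_prob[OF P A] divide_ennreal_def)
qed

lemma hausdorff_prob_tball_ge:
  assumes P: "prob_space (hausdorff_prob \<gamma> G)" and "ahlfors_regular G \<gamma>"
  obtains c where "0 < c" "\<And>y h. y \<in> G \<Longrightarrow> 0 < h \<Longrightarrow> h \<le> 1 \<Longrightarrow>
    ennreal (h powr \<gamma> / c\<^sup>2) \<le> emeasure (hausdorff_prob \<gamma> G) (tball y h)"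
proof -
  obtain c where "0 < c" and G: "G \<subseteq> torus" and ahlfors: "\<forall>x\<in>G. \<forall>r. 0 < r \<and> r \<le> 1 \<longrightarrow>
      ennreal (r powr \<gamma> / c) \<le> hausdorff \<gamma> (G \<inter> tball x r) \<and>
      hausdorff \<gamma> (G \<inter> tball x r) \<le> ennreal (c * r powr \<gamma>)"
    using assms(2) by (auto simp: ahlfors_regular_def)
  have "ennreal (h powr \<gamma> / c\<^sup>2) \<le> emeasure (hausdorff_prob \<gamma> G) (tball y h)"
    if "y \<in> G" "0 < h" "h \<le> 1" for y h
  proof -
    have "G \<inter> tball y 1 = G"
      using G tdist_less_one by (auto simp: tball_def)
    then have "hausdorff \<gamma> G \<le> ennreal c"
      using ahlfors \<open>y \<in> G\<close> by (metis less_numeral_extra(1) order_refl powr_one_eq_one mult_1_right)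
    moreover have "ennreal (h powr \<gamma> / c) \<le> hausdorff \<gamma> (tball y h \<inter> G)"
      using ahlfors that by (simp add: Int_commute)
    ultimately have "ennreal (h powr \<gamma> / c / c) \<le> emeasure (hausdorff_prob \<gamma> G) (tball y h)"
      using that G \<open>0 < c\<close> by (intro hausdorff_prob_ge[OF P] tball_torus_borel) auto
    then show ?thesis by (simp add: power2_eq_square)
  qed
  with \<open>0 < c\<close> that show ?thesis by blast
qed

lemma (in prob_space) prob_vimage_ge_of_distr:
  assumes "X \<in> measurable M N" "A \<in> sets N" "ennreal p \<le> emeasure (distr M N X) A"
  shows "p \<le> prob (X -` A \<inter> space M)"
  using assms measure_nonneg[of M "X -` A \<inter> space M"]
  by (auto simp: emeasure_distr emeasure_eq_measure ennreal_le_iff2)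

lemma (in prob_space) events_Collect_avoid:
  assumes "\<And>i. i \<in> B \<Longrightarrow> random_variable N (X i)" "finite B" "A \<in> sets N"
  shows "{\<omega> \<in> space M. \<forall>i\<in>B. X i \<omega> \<notin> A} \<in> events"
proof (rule sets.sets_Collect_finite_All[OF _ assms(2)])
  fix i assume "i \<in> B"
  then have "{\<omega> \<in> space M. X i \<omega> \<notin> A} = space M - (X i -` A \<inter> space M)" by auto
  with assms(1,3) \<open>i \<in> B\<close> show "{\<omega> \<in> space M. X i \<omega> \<notin> A} \<in> events"
    by (simp add: measurable_sets sets.compl_sets)
qed

lemma (in prob_space) prob_avoid_le_exp:
  assumes indep: "indep_vars (\<lambda>_. N) X I" and B: "finite B" "B \<subseteq> I" and A: "A \<in> sets N"
    and q: "\<And>i. i \<in> B \<Longrightarrow> q \<le> prob (X i -` A \<inter> space M)"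
  shows "prob {\<omega> \<in> space M. \<forall>i\<in>B. X i \<omega> \<notin> A} \<le> exp (- q * card B)"
proof (cases "B = {}")
  case True
  then show ?thesis by simp
next
  case False
  have rv: "random_variable N (X i)" if "i \<in> B" for i
    using indep that B by (auto simp: indep_vars_def)
  have compl: "prob (X i -` (space N - A) \<inter> space M) = 1 - prob (X i -` A \<inter> space M)"
    if "i \<in> B" for i
  proof -
    have "X i -` (space N - A) \<inter> space M = space M - (X i -` A \<inter> space M)"
      using rv[OF that] by (auto dest: measurable_space)
    then show ?thesis using rv[OF that] A by (simp add: prob_compl measurable_sets)
  qed
  obtain i0 where "i0 \<in> B" using False by blast
  then have "q \<le> 1" using q[of i0] prob_le_1 by (meson order_trans)
  have "{\<omega> \<in> space M. \<forall>i\<in>B. X i \<omega> \<notin> A} = (\<Inter>i\<in>B. X i -` (space N - A) \<inter> space M)"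
    using False rv by (auto dest: measurable_space)
  then have "prob {\<omega> \<in> space M. \<forall>i\<in>B. X i \<omega> \<notin> A} = (\<Prod>i\<in>B. prob (X i -` (space N - A) \<inter> space M))"
    using indep_varsD[OF indep False B(1,2), of "\<lambda>_. space N - A"] A by simp
  also have "\<dots> \<le> (\<Prod>i\<in>B. 1 - q)"
    using compl q by (intro prod_mono) (auto simp: measure_nonneg)
  also have "\<dots> = (1 - q) ^ card B" by simp
  also have "\<dots> \<le> exp (- q) ^ card B"
    using \<open>q \<le> 1\<close> exp_ge_add_one_self[of "- q"] by (intro power_mono) auto
  also have "\<dots> = exp (- q * card B)"
    by (simp add: exp_of_nat_mult[symmetric] mult.commute)
  finally show ?thesis .
qed

lemma torus_finite_net:
  assumes "G \<subseteq> torus" "0 < h"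
  obtains Y where "Y \<subseteq> G" "finite Y" "real (card Y) \<le> 1 / h + 1"
    "\<And>\<xi>. \<xi> \<in> G \<Longrightarrow> \<exists>y\<in>Y. tdist \<xi> y < 2 * h"
proof -
  define J where "J = {j \<in> {0..nat \<lfloor>1 / h\<rfloor>}. \<exists>y\<in>G. tdist (real j * h) y < h}"
  define pick where "pick j = (SOME y. y \<in> G \<and> tdist (real j * h) y < h)" for j
  have pick: "pick j \<in> G" "tdist (real j * h) (pick j) < h" if "j \<in> J" for j
    using someI_ex[of "\<lambda>y. y \<in> G \<and> tdist (real j * h) y < h"] that
    by (auto simp: J_def pick_def)
  have "J \<subseteq> {0..nat \<lfloor>1 / h\<rfloor>}" by (auto simp: J_def)
  then have "card (pick ` J) \<le> card {0..nat \<lfloor>1 / h\<rfloor>}"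
    using card_image_le[of J pick] card_mono[of "{0..nat \<lfloor>1 / h\<rfloor>}" J]
    by (meson finite_atLeastAtMost finite_subset order_trans)
  then have "real (card (pick ` J)) \<le> real (card {0..nat \<lfloor>1 / h\<rfloor>})" by simp
  also have "\<dots> \<le> 1 / h + 1" using \<open>0 < h\<close> by simp
  finally have card: "real (card (pick ` J)) \<le> 1 / h + 1" .
  have "\<exists>y\<in>pick ` J. tdist \<xi> y < 2 * h" if "\<xi> \<in> G" for \<xi>
  proof -
    define j where "j = nat \<lfloor>\<xi> / h\<rfloor>"
    have \<xi>: "0 \<le> \<xi>" "\<xi> < 1" using that assms(1) by (auto simp: torus_def)
    then have "real j \<le> \<xi> / h" "\<xi> / h < real j + 1"
      using \<open>0 < h\<close> by (auto simp: j_def)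
    then have "real j * h \<le> \<xi>" "\<xi> < real j * h + h"
      using \<open>0 < h\<close> by (auto simp: field_simps)
    then have close: "tdist (real j * h) \<xi> < h"
      using tdist_le_abs[of "real j * h" \<xi>] by simp
    have "j \<le> nat \<lfloor>1 / h\<rfloor>"
      using \<xi> \<open>0 < h\<close> unfolding j_def by (intro nat_mono floor_mono divide_right_mono) auto
    then have "j \<in> J" using close that by (auto simp: J_def)
    then have "tdist \<xi> (pick j) < 2 * h"
      using pick[OF \<open>j \<in> J\<close>] close tdist_triangle[of \<xi> "pick j" "real j * h"] tdist_commute[of \<xi> "real j * h"]
      by linarith
    with \<open>j \<in> J\<close> show ?thesis by blast
  qed
  moreover have "pick ` J \<subseteq> G" using pick by blast
  ultimately show ?thesis using that card by (simp add: J_def)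
qed

lemma (in prob_space) exists_event_torus_covered:
  assumes indep: "indep_vars (\<lambda>_. torus_borel) X I" and B: "finite B" "B \<subseteq> I"
    and "G \<subseteq> torus" "0 < h"
    and q: "\<And>y i. y \<in> G \<Longrightarrow> i \<in> B \<Longrightarrow> q \<le> prob (X i -` tball y h \<inter> space M)"
  shows "\<exists>F\<in>events. prob F \<le> (1 / h + 1) * exp (- q * card B) \<and>
    (\<forall>\<omega>\<in>space M - F. \<forall>\<xi>\<in>G. \<exists>i\<in>B. tdist \<xi> (X i \<omega>) < 3 * h)"
proof -
  obtain Y where Y: "Y \<subseteq> G" "finite Y" "real (card Y) \<le> 1 / h + 1"
    and net: "\<And>\<xi>. \<xi> \<in> G \<Longrightarrow> \<exists>y\<in>Y. tdist \<xi> y < 2 * h"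
    using torus_finite_net[OF \<open>G \<subseteq> torus\<close> \<open>0 < h\<close>] by blast
  define avoid where "avoid y = {\<omega> \<in> space M. \<forall>i\<in>B. X i \<omega> \<notin> tball y h}" for y
  have tball: "tball y h \<in> sets torus_borel" if "y \<in> Y" for y
    using that Y(1) \<open>G \<subseteq> torus\<close> by (auto intro: tball_torus_borel)
  have events: "avoid y \<in> events" if "y \<in> Y" for y
    unfolding avoid_def using indep B tball[OF that]
    by (intro events_Collect_avoid) (auto simp: indep_vars_def)
  have "prob (\<Union>y\<in>Y. avoid y) \<le> (\<Sum>y\<in>Y. prob (avoid y))"
    using events Y(2) by (intro finite_measure_subadditive_finite) auto
  also have "\<dots> \<le> (\<Sum>y\<in>Y. exp (- q * card B))"
    unfolding avoid_def using indep B tball q Y(1)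
    by (intro sum_mono prob_avoid_le_exp) auto
  also have "\<dots> \<le> (1 / h + 1) * exp (- q * card B)"
    using Y(3) by (simp add: mult_right_mono)
  finally have "prob (\<Union>y\<in>Y. avoid y) \<le> (1 / h + 1) * exp (- q * card B)" .
  moreover have "\<exists>i\<in>B. tdist \<xi> (X i \<omega>) < 3 * h"
    if \<omega>: "\<omega> \<in> space M - (\<Union>y\<in>Y. avoid y)" and "\<xi> \<in> G" for \<omega> \<xi>
  proof -
    obtain y where "y \<in> Y" "tdist \<xi> y < 2 * h" using net \<open>\<xi> \<in> G\<close> by blast
    moreover obtain i where "i \<in> B" "tdist y (X i \<omega>) < h"
      using \<omega> \<open>y \<in> Y\<close> by (auto simp: avoid_def tball_def)
    ultimately show ?thesis using tdist_triangle[of \<xi> "X i \<omega>" y] by force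
  qed
  ultimately show ?thesis using events Y(2) by blast
qed

lemma (in prob_space) AE_frequently_not_in:
  assumes events: "\<And>N. F N \<in> events"
    and small: "\<And>e. 0 < e \<Longrightarrow> \<exists>\<^sub>F N in sequentially. prob (F N) < e"
  shows "AE \<omega> in M. \<exists>\<^sub>F N in sequentially. \<omega> \<notin> F N"
proof -
  have null: "(\<Inter>N\<in>{K..}. F N) \<in> null_sets M" for K :: nat
  proof -
    have ev: "(\<Inter>N\<in>{K..}. F N) \<in> events"
      using events by (intro sets.countable_INT) auto
    have "prob (\<Inter>N\<in>{K..}. F N) \<le> e" if e: "0 < e" for e
    proof -
      obtain N where "N \<ge> K" "prob (F N) < e"
        using small[OF e] unfolding frequently_sequentially by blast
      moreover have "prob (\<Inter>N\<in>{K..}. F N) \<le> prob (F N)"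
        using \<open>N \<ge> K\<close> events by (intro finite_measure_mono) auto
      ultimately show ?thesis by linarith
    qed
    then have "prob (\<Inter>N\<in>{K..}. F N) = 0"
      by (metis dual_order.refl field_le_epsilon measure_nonneg add_0 antisym)
    with ev show ?thesis by (simp add: emeasure_eq_measure null_setsI)
  qed
  have "AE \<omega> in M. \<forall>K. \<omega> \<notin> (\<Inter>N\<in>{K..}. F N)"
    by (subst AE_all_countable) (intro allI AE_not_in null)
  then show ?thesis
    by eventually_elim (auto simp: frequently_def eventually_sequentially)
qed

lemma frequently_powr_le_of_not_summable:
  assumes "\<And>n. 0 \<le> r n" "\<not> summable (\<lambda>n. r n powr b)" "0 < b" "1 < \<sigma> * b"
  shows "\<exists>\<^sub>F N in sequentially. real N powr (- \<sigma>) \<le> r N"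
proof (rule ccontr)
  assume "\<not> ?thesis"
  then have "\<forall>\<^sub>F N in sequentially. r N < real N powr (- \<sigma>)"
    by (simp add: not_frequently not_le)
  then have "\<forall>\<^sub>F N in sequentially. norm (r N powr b) \<le> real N powr (- (\<sigma> * b))"
  proof eventually_elim
    case (elim N)
    then have "r N powr b \<le> (real N powr (- \<sigma>)) powr b"
      using assms(1,3) by (intro powr_mono2) auto
    then show ?case by (simp add: powr_powr)
  qed
  moreover have "summable (\<lambda>N. real N powr (- (\<sigma> * b)))"
    using assms(4) by (subst summable_real_powr_iff) simp
  ultimately have "summable (\<lambda>N. r N powr b)"
    by (rule summable_comparison_test_ev)
  with assms(2) show False by simp
qed

lemma powr_tendsto_0_of_summable:
  fixes r :: "nat \<Rightarrow> real"
  assumes "\<And>n. 0 \<le> r n" "summable (\<lambda>n. r n powr \<mu>)" "0 < \<mu>" "0 < \<nu>"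
  shows "(\<lambda>n. r n powr \<nu>) \<longlonglongrightarrow> 0"
proof -
  have "(\<lambda>n. (r n powr \<mu>) powr (\<nu> / \<mu>)) \<longlonglongrightarrow> 0"
    using assms
    by (intro tendsto_zero_powrI[OF summable_LIMSEQ_zero[OF assms(2)] tendsto_const]) auto
  then show ?thesis using assms(3) by (simp add: powr_powr)
qed

lemma block_miss_bound_le:
  fixes N r m :: real
  assumes "0 < N" "N powr (- \<sigma>) \<le> r" "0 < \<sigma>" "0 < \<nu>" "0 < \<gamma>" "0 < c" "N / 2 \<le> m"
  shows "(1 / (r powr \<nu> / 3) + 1) * exp (- ((r powr \<nu> / 3) powr \<gamma> / c\<^sup>2) * m)
    \<le> (3 * N powr (\<sigma> * \<nu>) + 1) * exp (- (N powr (1 - \<sigma> * (\<nu> * \<gamma>)) / (2 * c\<^sup>2 * 3 powr \<gamma>)))"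
proof -
  have "0 < r" using assms(1,2) by (smt (verit) powr_gt_zero)
  have "(N powr (- \<sigma>)) powr \<nu> \<le> r powr \<nu>" "(N powr (- \<sigma>)) powr (\<nu> * \<gamma>) \<le> r powr (\<nu> * \<gamma>)"
    using assms by (auto intro!: powr_mono2)
  then have low: "N powr (- (\<sigma> * \<nu>)) \<le> r powr \<nu>" "N powr (- (\<sigma> * (\<nu> * \<gamma>))) \<le> r powr (\<nu> * \<gamma>)"
    by (simp_all add: powr_powr)
  have "1 / (r powr \<nu> / 3) = 3 / r powr \<nu>" by simp
  also have "\<dots> \<le> 3 / N powr (- (\<sigma> * \<nu>))"
    using low(1) assms(1) \<open>0 < r\<close> by (intro divide_left_mono) (auto intro: mult_pos_pos)
  also have "\<dots> = 3 * N powr (\<sigma> * \<nu>)" by (simp add: powr_minus divide_inverse)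
  finally have factor: "1 / (r powr \<nu> / 3) \<le> 3 * N powr (\<sigma> * \<nu>)" .
  have "N powr (1 - \<sigma> * (\<nu> * \<gamma>)) / (2 * c\<^sup>2 * 3 powr \<gamma>)
      = N powr (- (\<sigma> * (\<nu> * \<gamma>))) / 3 powr \<gamma> / c\<^sup>2 * (N / 2)"
    using assms(1) by (simp add: powr_diff powr_minus field_simps)
  also have "\<dots> \<le> r powr (\<nu> * \<gamma>) / 3 powr \<gamma> / c\<^sup>2 * m"
    using low(2) assms by (intro mult_mono divide_right_mono) auto
  also have "\<dots> = (r powr \<nu> / 3) powr \<gamma> / c\<^sup>2 * m"
    using \<open>0 < r\<close> by (simp add: powr_divide powr_powr)
  finally have exponent: "N powr (1 - \<sigma> * (\<nu> * \<gamma>)) / (2 * c\<^sup>2 * 3 powr \<gamma>)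
      \<le> (r powr \<nu> / 3) powr \<gamma> / c\<^sup>2 * m" .
  show ?thesis
    using factor exponent by (intro mult_mono) auto
qed

lemma limsup_hits_subset:
  assumes "closedin (mtopology_of torus_metric) G" "\<And>n. x n \<in> G"
    and "(\<lambda>n. r n powr \<nu>) \<longlonglongrightarrow> 0"
  shows "limsup_hits x r \<nu> \<subseteq> G"
proof
  fix \<xi> assume "\<xi> \<in> limsup_hits x r \<nu>"
  then have "\<xi> \<in> torus" and hits: "\<exists>\<^sub>\<infinity>n. tdist \<xi> (x n) < r n powr \<nu>"
    by (auto simp: limsup_hits_def)
  show "\<xi> \<in> G"
  proof (rule ccontr)
    assume "\<xi> \<notin> G"
    then obtain e where "e > 0" and far: "\<And>y. y \<in> G \<Longrightarrow> e \<le> tdist \<xi> y"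
      using closedin_torus_dist_bounded_below[OF assms(1) \<open>\<xi> \<in> torus\<close>] by blast
    have "\<forall>\<^sub>F n in sequentially. r n powr \<nu> < e"
      using assms(3) \<open>e > 0\<close> by (auto dest: order_tendstoD)
    then have "\<forall>\<^sub>F n in sequentially. tdist \<xi> (x n) < r n powr \<nu> \<longrightarrow> tdist \<xi> (x n) < e"
      by eventually_elim auto
    moreover have "\<exists>\<^sub>F n in sequentially. tdist \<xi> (x n) < r n powr \<nu>"
      using hits by (simp add: cofinite_eq_sequentially)
    ultimately have "\<exists>\<^sub>F n in sequentially. tdist \<xi> (x n) < e"
      by (rule frequently_mp)
    then obtain n where "tdist \<xi> (x n) < e" by (auto dest: frequently_ex)
    with far[OF assms(2)] show False by (simp add: not_le[symmetric])
  qed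
qed

lemma subset_limsup_hits:
  assumes "G \<subseteq> torus" "decseq r" "\<And>n. 0 < r n" "0 < \<nu>"
    and covered: "\<exists>\<^sub>F N in sequentially. \<forall>\<xi>\<in>G. \<exists>n\<in>{N div 2<..N}. tdist \<xi> (x n) < r N powr \<nu>"
  shows "G \<subseteq> limsup_hits x r \<nu>"
proof
  fix \<xi> assume "\<xi> \<in> G"
  have "\<exists>n>m. tdist \<xi> (x n) < r n powr \<nu>" for m
  proof -
    obtain N where "N \<ge> 2 * m + 2" and "\<forall>\<xi>\<in>G. \<exists>n\<in>{N div 2<..N}. tdist \<xi> (x n) < r N powr \<nu>"
      using covered unfolding frequently_sequentially by blast
    then obtain n where "n \<in> {N div 2<..N}" "tdist \<xi> (x n) < r N powr \<nu>"
      using \<open>\<xi> \<in> G\<close> by blast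
    then have n: "N div 2 < n" "n \<le> N" "tdist \<xi> (x n) < r N powr \<nu>" by auto
    have "r N powr \<nu> \<le> r n powr \<nu>"
      using assms(2-4) n(2) by (intro powr_mono2) (auto simp: decseq_def less_imp_le)
    moreover have "m < n" using n(1) \<open>N \<ge> 2 * m + 2\<close> by linarith
    ultimately show ?thesis using n(3) by (meson less_le_trans)
  qed
  then show "\<xi> \<in> limsup_hits x r \<nu>"
    using \<open>\<xi> \<in> G\<close> assms(1) by (auto simp: limsup_hits_def INFM_nat)
qed

lemma frequently_block_miss_bound_small:
  assumes "0 < c" "0 < \<gamma>" "0 < \<nu>" "0 < e"
    and r: "\<And>n. 0 < r n"
    and diverge: "\<not> summable (\<lambda>n. r n powr b)" "\<gamma> * \<nu> < b"
  shows "\<exists>\<^sub>F N in sequentially.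
    (1 / (r N powr \<nu> / 3) + 1) * exp (- ((r N powr \<nu> / 3) powr \<gamma> / c\<^sup>2) * card {N div 2<..N}) < e"
proof -
  \<comment> \<open>Any \<open>\<sigma>\<close> with \<open>\<sigma>\<nu>\<gamma> < 1 < \<sigma>b\<close> works: the second inequality makes \<open>r\<^sub>N \<ge> N\<^sup>-\<^sup>\<sigma>\<close> happen
    infinitely often, the first makes the bound decay like \<open>exp(-N\<^sup>1\<^sup>-\<^sup>\<sigma>\<^sup>\<nu>\<^sup>\<gamma>)\<close> there.\<close>
  define \<sigma> where "\<sigma> = 2 / (\<nu> * \<gamma> + b)"
  have "0 < \<nu> * \<gamma>" using assms by simp
  then have \<sigma>: "0 < \<sigma>" "1 < \<sigma> * b" "\<sigma> * (\<nu> * \<gamma>) < 1"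
    using diverge(2) by (auto simp: \<sigma>_def field_simps)
  have often: "\<exists>\<^sub>F N in sequentially. real N powr (- \<sigma>) \<le> r N"
    using r diverge \<sigma> \<open>0 < \<nu> * \<gamma>\<close>
    by (intro frequently_powr_le_of_not_summable) (auto intro: less_imp_le simp: mult.commute)
  define g where "g N = (3 * N powr (\<sigma> * \<nu>) + 1) *
    exp (- (N powr (1 - \<sigma> * (\<nu> * \<gamma>)) / (2 * c\<^sup>2 * 3 powr \<gamma>)))" for N :: real
  have "(g \<longlongrightarrow> 0) at_top"
    using \<sigma>(3) \<open>0 < c\<close> unfolding g_def by real_asymp
  then have g: "(\<lambda>N. g (real N)) \<longlonglongrightarrow> 0"
    by (rule filterlim_compose) (rule filterlim_real_sequentially)
  have "\<forall>\<^sub>F N in sequentially. 0 < N \<and> g (real N) < e"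
    using order_tendstoD(2)[OF g \<open>0 < e\<close>] eventually_gt_at_top[of 0] by eventually_elim auto
  then show ?thesis
  proof (rule frequently_mp[OF eventually_mono often], intro impI)
    fix N :: nat assume N: "0 < N \<and> g (real N) < e" and "real N powr (- \<sigma>) \<le> r N"
    have "real N / 2 \<le> real (card {N div 2<..N})" by simp
    then show "(1 / (r N powr \<nu> / 3) + 1) *
        exp (- ((r N powr \<nu> / 3) powr \<gamma> / c\<^sup>2) * card {N div 2<..N}) < e"
      using N block_miss_bound_le[OF _ \<open>real N powr (- \<sigma>) \<le> r N\<close> \<sigma>(1) assms(3,2,1)]
      unfolding g_def by (meson of_nat_0_less_iff order.strict_trans1)
  qed
qed

lemma (in prob_space) AE_frequently_covered:
  fixes X :: "nat \<Rightarrow> 'a \<Rightarrow> real"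
  assumes indep: "indep_vars (\<lambda>_. torus_borel) X UNIV" and "G \<subseteq> torus"
    and "0 < c" "0 < \<gamma>" "0 < \<nu>"
    and ball: "\<And>n y h. y \<in> G \<Longrightarrow> 0 < h \<Longrightarrow> h \<le> 1 \<Longrightarrow>
      h powr \<gamma> / c\<^sup>2 \<le> prob (X n -` tball y h \<inter> space M)"
    and r: "\<And>n. 0 < r n \<and> r n \<le> 1"
    and diverge: "\<not> summable (\<lambda>n. r n powr b)" "\<gamma> * \<nu> < b"
  shows "AE \<omega> in M. \<exists>\<^sub>F N in sequentially.
    \<forall>\<xi>\<in>G. \<exists>n\<in>{N div 2<..N}. tdist \<xi> (X n \<omega>) < r N powr \<nu>"
proof -
  let ?h = "\<lambda>N. r N powr \<nu> / 3"
  have h: "0 < ?h N" "?h N \<le> 1" for N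
    using r[of N] \<open>0 < \<nu>\<close> powr_le1[of \<nu> "r N"] by auto
  have "\<exists>F\<in>events. prob F \<le> (1 / ?h N + 1) * exp (- (?h N powr \<gamma> / c\<^sup>2) * card {N div 2<..N}) \<and>
      (\<forall>\<omega>\<in>space M - F. \<forall>\<xi>\<in>G. \<exists>n\<in>{N div 2<..N}. tdist \<xi> (X n \<omega>) < 3 * ?h N)" for N
    using h ball by (intro exists_event_torus_covered[OF indep _ _ \<open>G \<subseteq> torus\<close>]) auto
  then obtain F where F: "\<And>N. F N \<in> events"
    "\<And>N. prob (F N) \<le> (1 / ?h N + 1) * exp (- (?h N powr \<gamma> / c\<^sup>2) * card {N div 2<..N})"
    "\<And>N \<omega> \<xi>. \<omega> \<in> space M - F N \<Longrightarrow> \<xi> \<in> G \<Longrightarrow> \<exists>n\<in>{N div 2<..N}. tdist \<xi> (X n \<omega>) < 3 * ?h N"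
    by metis
  have "\<exists>\<^sub>F N in sequentially. prob (F N) < e" if "0 < e" for e
    using frequently_block_miss_bound_small[OF \<open>0 < c\<close> \<open>0 < \<gamma>\<close> \<open>0 < \<nu>\<close> that _ diverge] r F(2)
    by (auto elim!: frequently_elim1 intro: le_less_trans)
  with F(1) have "AE \<omega> in M. \<exists>\<^sub>F N in sequentially. \<omega> \<notin> F N"
    by (rule AE_frequently_not_in)
  then show ?thesis
  proof (rule AE_mp[OF _ AE_I2], intro impI)
    fix \<omega> assume "\<omega> \<in> space M" "\<exists>\<^sub>F N in sequentially. \<omega> \<notin> F N"
    then show "\<exists>\<^sub>F N in sequentially. \<forall>\<xi>\<in>G. \<exists>n\<in>{N div 2<..N}. tdist \<xi> (X n \<omega>) < r N powr \<nu>"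
      using F(3) by (auto elim!: frequently_elim1)
  qed
qed

lemma (in prob_space) AE_in_support_hausdorff_prob:
  assumes "X \<in> measurable M torus_borel" "distr M torus_borel X = hausdorff_prob \<gamma> G"
    and "G \<in> sets torus_borel" "G \<subseteq> torus"
  shows "AE \<omega> in M. X \<omega> \<in> G"
proof -
  have P: "prob_space (hausdorff_prob \<gamma> G)"
    using prob_space_distr[OF assms(1)] assms(2) by simp
  have "emeasure (hausdorff_prob \<gamma> G) G = emeasure (hausdorff_prob \<gamma> G) torus"
    using assms(3,4) emeasure_hausdorff_prob[OF P] sets.top[of torus_borel]
    by (simp add: space_torus_borel Int_absorb1)
  then have "emeasure M (X -` G \<inter> space M) = 1"
    using prob_space.emeasure_space_1[OF P] emeasure_distr[OF assms(1,3)] assms(2)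
    by (simp add: space_hausdorff_prob)
  then have "AE \<omega> in M. \<omega> \<in> X -` G \<inter> space M"
    by (intro AE_prob_1) (simp add: emeasure_eq_measure)
  then show ?thesis by auto
qed

theorem lemma4p2:
  fixes G :: "real set" and \<gamma> \<rho> \<nu> :: real and r :: "nat \<Rightarrow> real"
    and M :: "'a measure" and X :: "nat \<Rightarrow> 'a \<Rightarrow> real"
  assumes G_compact: "compactin (mtopology_of torus_metric) G"
    and G_ahlfors: "ahlfors_regular G \<gamma>"
    and gamma: "0 < \<gamma>" "\<gamma> \<le> 1"
    and M: "prob_space M"
    and X_meas: "\<And>n. X n \<in> measurable M torus_borel"
    and X_indep: "prob_space.indep_vars M (\<lambda>_. torus_borel) X UNIV"
    and X_distr: "\<And>n. distr M torus_borel (X n) = hausdorff_prob \<gamma> G"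
    and r_range: "\<And>n. 0 < r n \<and> r n \<le> 1"
    and r_mono: "decseq r"
    and rho: "0 < \<rho>"
    and r_div: "\<And>\<mu>. \<mu> < \<rho> \<Longrightarrow> \<not> summable (\<lambda>n. r n powr \<mu>)"
    and r_conv: "\<And>\<mu>. \<mu> > \<rho> \<Longrightarrow> summable (\<lambda>n. r n powr \<mu>)"
    and nu: "0 < \<nu>"
    and gamma_nu: "\<gamma> * \<nu> < \<rho>"
  shows "AE \<omega> in M. limsup_hits (\<lambda>n. X n \<omega>) r \<nu> = G"
proof -
  interpret prob_space M by (rule M)
  have G: "G \<subseteq> torus" using G_ahlfors by (simp add: ahlfors_regular_def)
  have G_closed: "closedin (mtopology_of torus_metric) G"
    using G_compact by (rule compactin_imp_closedin_torus)
  have P: "prob_space (hausdorff_prob \<gamma> G)"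
    using prob_space_distr[OF X_meas] X_distr by metis
  obtain c where "0 < c" and ball: "\<And>y h. y \<in> G \<Longrightarrow> 0 < h \<Longrightarrow> h \<le> 1 \<Longrightarrow>
      ennreal (h powr \<gamma> / c\<^sup>2) \<le> emeasure (hausdorff_prob \<gamma> G) (tball y h)"
    using hausdorff_prob_tball_ge[OF P G_ahlfors] by blast
  have in_G: "AE \<omega> in M. \<forall>n. X n \<omega> \<in> G"
    using G G_closed X_meas X_distr
    by (subst AE_all_countable) (auto intro: AE_in_support_hausdorff_prob closedin_torus_borel)
  have covered: "AE \<omega> in M. \<exists>\<^sub>F N in sequentially.
      \<forall>\<xi>\<in>G. \<exists>n\<in>{N div 2<..N}. tdist \<xi> (X n \<omega>) < r N powr \<nu>"
    using gamma_nu ball X_distr G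
    by (intro AE_frequently_covered[OF X_indep G \<open>0 < c\<close> gamma(1) nu _ r_range
          r_div[of "(\<gamma> * \<nu> + \<rho>) / 2"]] prob_vimage_ge_of_distr[OF X_meas] tball_torus_borel)
      auto
  have r_lim: "(\<lambda>n. r n powr \<nu>) \<longlonglongrightarrow> 0"
    using r_range rho nu
    by (intro powr_tendsto_0_of_summable[of r "\<rho> + 1"] r_conv) (auto intro: less_imp_le)
  from in_G covered show ?thesis
  proof eventually_elim
    case (elim \<omega>)
    then show ?case
      using limsup_hits_subset[OF G_closed _ r_lim] subset_limsup_hits[OF G r_mono _ nu] r_range
      by (simp add: subset_antisym)
  qed
qed

end
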